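(* Let $S_f=\{f_i\ge0: i=1,\ldots,m\}$ be an inequality set in $\mathbf{x}=(x_1,\ldots,x_n)$ and fix the variable order $x_1\prec\cdots\prec x_n$. Then the reduced minimal characterization set of $S_f$ is unique: the equality part $\widetilde{E}$ is uniquely determined by $S_f$, and any two minimal characterization sets of $\{g\ge0: g\in R_f\}$ are trivially equivalent.
   Context: An inequality set is a finite set $S=\{f_i\ge 0: i=1,\ldots,m\}$ with each $f_i$ a nonzero homogeneous linear polynomial in $\mathbf{x}$ with real coefficients; its solutions are the points of $\mathbb{R}^n$ satisfying all inequalities; a subset of $S$ is an inequality set whose polynomials form a subset of $\{f_1,\ldots,f_m\}$. The equality $f_k=0$ is an implied equality of $S$ if $f_k(\mathbf{x})=0$ for every solution of $S$. Inequalities $f_1\ge0,\ldots,f_k\ge0$ imply $f\ge0$ if every $\mathbf{x}$ satisfying the former satisfies $f(\mathbf{x})\ge0$; an inequality of a set is redundant if implied by the other inequalities of the set. Two inequality sets are equivalent if they have the same solution set. A subset $S'$ of $S$ is a minimal characterization set of $S$ if $S'$ is equivalent to $S$ and contains no redundant inequality. Two inequalities $f\ge0$, $g\ge 0$ are trivially equivalent if $f=c\,g$ for some real $c>0$; two inequality sets are trivially equivalent if they have the same number of inequalities and each inequality of either set is trivially equivalent to some inequality of the other. For a finite system $E$ of homogeneous linear equations of rank $\tilde n$, its Gauss–Jordan reduced form (reduced row echelon form) w.r.t. $x_1\prec\cdots\prec x_n$ is the unique equivalent system $\{x_{k_i}-U_i=0: i=1,\ldots,\tilde n\}$, $k_1<\cdots<k_{\tilde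 n}$, each $U_i$ a real linear combination of non-pivot variables. Construction: let $I$ be the set of indices $k$ with $f_k=0$ an implied equality of $S_f$, $E=\{f_k=0:k\in I\}$, and $\widetilde E=\{x_{k_i}-U_i=0\}$ its Gauss–Jordan reduced form; let $R_f$ be the set of nonzero polynomials obtained from $f_j$, $j\notin I$, by substituting $U_i$ for $x_{k_i}$ for all $i$. A reduced minimal characterization set of $S_f$ is $\widetilde{E}\cup S_{r'}$, where $S_{r'}$ is a minimal characterization set of the inequality set $\{g\ge 0: g\in R_f\}$. *)

theory Defs
  imports Complex_Main
begin

text \<open>A homogeneous linear polynomial in x_1,...,x_n is represented by its
coefficient function f :: nat => real (coefficient of x_(k+1) is f k),
with f k = 0 for k >= n. Points of R^n are functions x :: nat => real
vanishing outside {0..<n}. Variable order x_1 < ... < x_n is index order.\<close>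

definition lin_form :: "nat \<Rightarrow> (nat \<Rightarrow> real) \<Rightarrow> bool" where
  "lin_form n f \<longleftrightarrow> (\<forall>k\<ge>n. f k = 0)"

definition lf :: "nat \<Rightarrow> (nat \<Rightarrow> real) \<Rightarrow> (nat \<Rightarrow> real) \<Rightarrow> real" where
  "lf n f x = (\<Sum>k<n. f k * x k)"

definition points :: "nat \<Rightarrow> (nat \<Rightarrow> real) set" where
  "points n = {x. \<forall>k\<ge>n. x k = 0}"

text \<open>An inequality set: finite set of nonzero homogeneous linear forms f (meaning f >= 0).\<close>
definition ineq_set :: "nat \<Rightarrow> (nat \<Rightarrow> real) set \<Rightarrow> bool" where
  "ineq_set n S \<longleftrightarrow> finite S \<and> (\<forall>f\<in>S. lin_form n f \<and> f \<noteq> (\<lambda>_. 0))"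

definition sols :: "nat \<Rightarrow> (nat \<Rightarrow> real) set \<Rightarrow> (nat \<Rightarrow> real) set" where
  "sols n S = {x \<in> points n. \<forall>f\<in>S. 0 \<le> lf n f x}"

definition implied_eq :: "nat \<Rightarrow> (nat \<Rightarrow> real) set \<Rightarrow> (nat \<Rightarrow> real) \<Rightarrow> bool" where
  "implied_eq n S f \<longleftrightarrow> (\<forall>x\<in>sols n S. lf n f x = 0)"

definition impl_eqs :: "nat \<Rightarrow> (nat \<Rightarrow> real) set \<Rightarrow> (nat \<Rightarrow> real) set" where
  "impl_eqs n S = {f \<in> S. implied_eq n S f}"

definition implies_ineq :: "nat \<Rightarrow> (nat \<Rightarrow> real) set \<Rightarrow> (nat \<Rightarrow> real) \<Rightarrow> bool" where
  "implies_ineq n T f \<longleftrightarrow> (\<forall>x\<in>sols n T. 0 \<le> lf n f x)"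

definition redundant :: "nat \<Rightarrow> (nat \<Rightarrow> real) set \<Rightarrow> (nat \<Rightarrow> real) \<Rightarrow> bool" where
  "redundant n S f \<longleftrightarrow> implies_ineq n (S - {f}) f"

definition equiv_sets :: "nat \<Rightarrow> (nat \<Rightarrow> real) set \<Rightarrow> (nat \<Rightarrow> real) set \<Rightarrow> bool" where
  "equiv_sets n S T \<longleftrightarrow> sols n S = sols n T"

definition min_char :: "nat \<Rightarrow> (nat \<Rightarrow> real) set \<Rightarrow> (nat \<Rightarrow> real) set \<Rightarrow> bool" where
  "min_char n S S' \<longleftrightarrow> S' \<subseteq> S \<and> equiv_sets n S' S \<and> (\<forall>f\<in>S'. \<not> redundant n S' f)"

definition triv_equiv :: "(nat \<Rightarrow> real) \<Rightarrow> (nat \<Rightarrow> real) \<Rightarrow> bool" where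
  "triv_equiv f g \<longleftrightarrow> (\<exists>c>0. f = (\<lambda>k. c * g k))"

definition triv_equiv_sets :: "(nat \<Rightarrow> real) set \<Rightarrow> (nat \<Rightarrow> real) set \<Rightarrow> bool" where
  "triv_equiv_sets S T \<longleftrightarrow> card S = card T \<and>
     (\<forall>f\<in>S. \<exists>g\<in>T. triv_equiv f g) \<and> (\<forall>g\<in>T. \<exists>f\<in>S. triv_equiv g f)"

text \<open>Gauss-Jordan reduced form (reduced row echelon form, columns in the order
x_1,...,x_n): the system x_(k_i) - U_i = 0, i < length ks, given by pivot list ks
(strictly increasing, all < n) and list Us of linear forms U_i; each U_i involves only
non-pivot variables, and only variables after its pivot (the pivot is the leading
entry of its row).\<close>
definition gj_reduced :: "nat \<Rightarrow> (nat \<Rightarrow> real) set \<Rightarrow> nat list \<Rightarrow> (nat \<Rightarrow> real) list \<Rightarrow> bool" where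
  "gj_reduced n E ks Us \<longleftrightarrow>
     length Us = length ks \<and> sorted_wrt (<) ks \<and> (\<forall>k\<in>set ks. k < n) \<and>
     (\<forall>i<length ks. lin_form n (Us ! i) \<and>
        (\<forall>l\<in>set ks. (Us ! i) l = 0) \<and> (\<forall>l\<le>ks ! i. (Us ! i) l = 0)) \<and>
     {x \<in> points n. \<forall>i<length ks. x (ks ! i) = lf n (Us ! i) x}
       = {x \<in> points n. \<forall>f\<in>E. lf n f x = 0}"

text \<open>Substituting U_i for x_(k_i) in f, for all i.\<close>
definition subst_piv :: "nat list \<Rightarrow> (nat \<Rightarrow> real) list \<Rightarrow> (nat \<Rightarrow> real) \<Rightarrow> (nat \<Rightarrow> real)" where
  "subst_piv ks Us f = (\<lambda>l. (if l \<in> set ks then 0 else f l) +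
                            (\<Sum>i<length ks. f (ks ! i) * (Us ! i) l))"

definition reduced_set :: "nat \<Rightarrow> (nat \<Rightarrow> real) set \<Rightarrow> nat list \<Rightarrow> (nat \<Rightarrow> real) list \<Rightarrow> (nat \<Rightarrow> real) set" where
  "reduced_set n S ks Us =
     {g. \<exists>f\<in>S - impl_eqs n S. g = subst_piv ks Us f \<and> g \<noteq> (\<lambda>_. 0)}"

end

theory Submission
  imports Defs
begin

text \<open>The pivots of a reduced row echelon form of \<open>E\<close> are intrinsic to its solution space:
\<open>x\<^sub>k\<close> is a free variable iff some solution has \<open>x\<^sub>k = 1\<close> and vanishes at all later
variables. Given the pivots, the coefficient of a free variable \<open>x\<^sub>l\<close> in \<open>U\<^sub>i\<close> is the
entry at the pivot \<open>k\<^sub>i\<close> of the solution with \<open>x\<^sub>l = 1\<close> and all other free variables 0,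
so the \<open>U\<^sub>i\<close> are determined as well.

Substituting the pivots does not change the values of the forms on solutions of \<open>S\<close>, so no
form of \<open>R\<close> is an implied equality and \<open>R\<close> has a point \<open>x\<^sub>0\<close> at which all its forms are
positive. Let \<open>T\<^sub>1\<close>, \<open>T\<^sub>2\<close> be minimal characterization sets of \<open>R\<close> and \<open>f \<in> T\<^sub>1\<close>. As \<open>f\<close> is
not redundant, combining \<open>x\<^sub>0\<close> with a point that violates only \<open>f\<close> gives a solution \<open>z\<close>
at which \<open>f\<close> is the only active form of \<open>T\<^sub>1\<close>, so the feasible directions at \<open>z\<close> form the
half-space \<open>f \<ge> 0\<close>. Computing the same cone from \<open>T\<^sub>2\<close> yields \<open>g \<in> T\<^sub>2\<close> such that \<open>f \<ge> 0\<close>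
implies \<open>g \<ge> 0\<close>, hence \<open>g\<close> is a positive multiple of \<open>f\<close>. Two members of a nonredundant set
are never positive multiples of the same form, so this correspondence is injective in both
directions and \<open>T\<^sub>1\<close>, \<open>T\<^sub>2\<close> have the same cardinality.\<close>

definition unit_vec :: "nat \<Rightarrow> nat \<Rightarrow> real" where
  "unit_vec l = (\<lambda>m. if m = l then 1 else 0)"

lemma unit_vec_points: "l < n \<Longrightarrow> unit_vec l \<in> points n"
  by (simp add: unit_vec_def points_def)

lemma lf_unit_vec: "l < n \<Longrightarrow> lf n f (unit_vec l) = f l"
  by (simp add: lf_def unit_vec_def if_distrib cong: if_cong)

lemma lf_lincomb: "lf n f (\<lambda>k. a * x k + b * y k) = a * lf n f x + b * lf n f y"
  by (simp add: lf_def sum.distrib sum_distrib_left algebra_simps)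

lemma lf_add_smult: "lf n f (\<lambda>k. x k + b * y k) = lf n f x + b * lf n f y"
  using lf_lincomb[of n f 1 x b y] by simp

lemma lf_smult: "lf n f (\<lambda>k. a * x k) = a * lf n f x"
  using lf_lincomb[of n f a x 0 x] by simp

lemma lf_smult_form: "lf n (\<lambda>k. a * f k) x = a * lf n f x"
  by (simp add: lf_def sum_distrib_left algebra_simps)

lemma lf_sum: "lf n f (\<lambda>k. \<Sum>g\<in>A. X g k) = (\<Sum>g\<in>A. lf n f (X g))"
  unfolding lf_def sum_distrib_left by (rule sum.swap)

lemma lin_form_nonzero_coeff:
  assumes "lin_form n f" "f \<noteq> (\<lambda>_. 0)"
  obtains k where "k < n" "f k \<noteq> 0"
  using assms unfolding lin_form_def by (metis not_le)

lemma nonneg_multiple_if_implies_nonneg: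
  assumes f: "lin_form n f" "f \<noteq> (\<lambda>_. 0)" and g: "lin_form n g"
    and imp: "\<forall>w\<in>points n. 0 \<le> lf n f w \<longrightarrow> 0 \<le> lf n g w"
  shows "\<exists>c\<ge>0. g = (\<lambda>k. c * f k)"
proof -
  obtain k where k: "k < n" "f k \<noteq> 0" using lin_form_nonzero_coeff[OF f] .
  define c where "c = g k / f k"
  have on_kernel: "lf n g w = 0" if "w \<in> points n" "lf n f w = 0" for w
  proof -
    have neg: "(\<lambda>m. (-1) * w m) \<in> points n" using that(1) by (simp add: points_def)
    have "0 \<le> - lf n g w" using imp[rule_format, OF neg] that(2) unfolding lf_smult by simp
    moreover have "0 \<le> lf n g w" using imp that by simp
    ultimately show ?thesis by simp
  qed
  have proportional: "lf n g w = c * lf n f w" if w: "w \<in> points n" for w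
  proof -
    define w' where "w' = (\<lambda>m. w m + (- (lf n f w / f k)) * unit_vec k m)"
    have "w' \<in> points n" using w k unfolding w'_def by (simp add: points_def unit_vec_def)
    moreover have "lf n f w' = 0" using k unfolding w'_def lf_add_smult lf_unit_vec[OF k(1)] by simp
    ultimately have "lf n g w' = 0" by (rule on_kernel)
    then show ?thesis using k unfolding w'_def lf_add_smult lf_unit_vec[OF k(1)] c_def
      by (simp add: field_simps)
  qed
  have "g = (\<lambda>l. c * f l)"
  proof
    fix l
    show "g l = c * f l"
    proof (cases "l < n")
      case True
      then show ?thesis using proportional[OF unit_vec_points[OF True]] by (simp add: lf_unit_vec)
    next
      case False
      then show ?thesis using f(1) g unfolding lin_form_def by simp
    qed
  qed
  moreover have "0 \<le> c"
  proof -
    define v where "v = (\<lambda>m. f k * unit_vec k m)"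
    have v: "v \<in> points n" using k(1) unfolding v_def by (simp add: points_def unit_vec_def)
    have pos: "0 < lf n f v"
      using k unfolding v_def by (simp add: lf_smult lf_unit_vec not_square_less_zero less_le)
    then have "0 \<le> c * lf n f v" using imp[rule_format, OF v] proportional[OF v] by simp
    then show ?thesis using pos by (simp add: zero_le_mult_iff)
  qed
  ultimately show ?thesis by blast
qed

section \<open>Minimal characterization sets\<close>

lemma feasible_direction_iff:
  assumes "finite T" "z \<in> sols n T" "w \<in> points n"
  shows "(\<exists>e>0. (\<lambda>k. z k + e * w k) \<in> sols n T) \<longleftrightarrow> (\<forall>g\<in>T. lf n g z = 0 \<longrightarrow> 0 \<le> lf n g w)"
proof
  assume "\<exists>e>0. (\<lambda>k. z k + e * w k) \<in> sols n T"
  then obtain e where e: "e > 0" "(\<lambda>k. z k + e * w k) \<in> sols n T" by blast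
  show "\<forall>g\<in>T. lf n g z = 0 \<longrightarrow> 0 \<le> lf n g w"
  proof (intro ballI impI)
    fix g assume "g \<in> T" "lf n g z = 0"
    then have "0 \<le> e * lf n g w" using e(2) unfolding sols_def by (auto simp: lf_add_smult)
    then show "0 \<le> lf n g w" using e(1) by (simp add: zero_le_mult_iff)
  qed
next
  assume active: "\<forall>g\<in>T. lf n g z = 0 \<longrightarrow> 0 \<le> lf n g w"
  have "\<forall>\<^sub>F e in at_right 0. 0 \<le> lf n g z + e * lf n g w" if g: "g \<in> T" for g
  proof (cases "lf n g z = 0")
    case True
    then show ?thesis using active g unfolding eventually_at_right_field
      by (intro exI[of _ 1]) simp
  next
    case False
    then have "0 < lf n g z" using assms(2) g unfolding sols_def by force
    moreover have "((\<lambda>e. lf n g z + e * lf n g w) \<longlongrightarrow> lf n g z + 0 * lf n g w) (at_right 0)"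
      by (intro tendsto_intros)
    ultimately show ?thesis by (auto elim: order_tendstoD(1)[THEN eventually_mono])
  qed
  then have "\<forall>\<^sub>F e in at_right 0. \<forall>g\<in>T. 0 \<le> lf n g z + e * lf n g w"
    by (simp add: eventually_ball_finite_distrib[OF assms(1)])
  then obtain b :: real where b: "b > 0" "\<forall>e>0. e < b \<longrightarrow> (\<forall>g\<in>T. 0 \<le> lf n g z + e * lf n g w)"
    unfolding eventually_at_right_field by blast
  have "\<forall>g\<in>T. 0 \<le> lf n g (\<lambda>k. z k + b / 2 * w k)"
    unfolding lf_add_smult using b(2)[rule_format, of "b / 2"] b(1) by simp
  then have "(\<lambda>k. z k + b / 2 * w k) \<in> sols n T"
    using assms(2,3) unfolding sols_def points_def by simp
  then show "\<exists>e>0. (\<lambda>k. z k + e * w k) \<in> sols n T" using b(1) by (intro exI[of _ "b / 2"]) simp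
qed

lemma exists_strict_point:
  assumes "finite R" "impl_eqs n R = {}"
  obtains x0 where "x0 \<in> points n" "\<forall>h\<in>R. 0 < lf n h x0"
proof -
  have "\<exists>x. x \<in> sols n R \<and> 0 < lf n h x" if h: "h \<in> R" for h
  proof -
    obtain x where x: "x \<in> sols n R" "lf n h x \<noteq> 0"
      using assms(2) h unfolding impl_eqs_def implied_eq_def by blast
    moreover have "0 \<le> lf n h x" using x(1) h unfolding sols_def by blast
    ultimately show ?thesis by force
  qed
  then obtain X where X: "\<forall>h\<in>R. X h \<in> sols n R \<and> 0 < lf n h (X h)" by metis
  define x0 where "x0 = (\<lambda>k. \<Sum>h\<in>R. X h k)"
  have "x0 \<in> points n" using X unfolding x0_def sols_def points_def by simp
  moreover have "0 < lf n h x0" if h: "h \<in> R" for h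
  proof -
    have "lf n h (X h) \<le> (\<Sum>g\<in>R. lf n h (X g))"
      by (rule member_le_sum[OF h _ assms(1)]) (use X h in \<open>auto simp: sols_def\<close>)
    then show ?thesis using X h unfolding x0_def lf_sum by force
  qed
  ultimately show ?thesis using that by blast
qed

lemma facet_point_of_nonredundant:
  assumes f: "f \<in> T" "\<not> redundant n T f"
    and x0: "x0 \<in> points n" "\<forall>h\<in>T. 0 < lf n h x0"
  obtains z where "z \<in> sols n T" "lf n f z = 0" "\<forall>h\<in>T - {f}. 0 < lf n h z"
proof -
  obtain y where y: "y \<in> sols n (T - {f})" "lf n f y < 0"
    using f(2) unfolding redundant_def implies_ineq_def by (auto simp: not_le)
  define z where "z = (\<lambda>k. lf n f x0 * y k + (- lf n f y) * x0 k)"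
  have fz: "lf n f z = 0" unfolding z_def lf_lincomb by simp
  have pos: "0 < lf n h z" if h: "h \<in> T - {f}" for h
  proof -
    have "0 \<le> lf n h y" "0 < lf n h x0" using y(1) x0(2) h unfolding sols_def by auto
    then show ?thesis unfolding z_def lf_lincomb using f(1) x0(2) y(2)
      by (intro add_nonneg_pos mult_nonneg_nonneg mult_pos_pos) auto
  qed
  have "z \<in> points n" using y(1) x0(1) unfolding z_def points_def sols_def by simp
  moreover have "0 \<le> lf n h z" if "h \<in> T" for h
    using that fz pos[of h] by (cases "h = f") auto
  ultimately have "z \<in> sols n T" unfolding sols_def by blast
  then show ?thesis using that fz pos by blast
qed

lemma min_char_member_triv_equiv:
  assumes R: "ineq_set n R" and x0: "x0 \<in> points n" "\<forall>h\<in>R. 0 < lf n h x0"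
    and T1: "min_char n R T1" and T2: "min_char n R T2" and f: "f \<in> T1"
  shows "\<exists>g\<in>T2. triv_equiv f g"
proof -
  have T12: "T1 \<subseteq> R" "T2 \<subseteq> R" "sols n T1 = sols n T2"
    using T1 T2 unfolding min_char_def equiv_sets_def by auto
  have fin: "finite T1" "finite T2" using T12 R finite_subset unfolding ineq_set_def by auto
  have fR: "f \<in> R" using f T12 by auto
  obtain z where z: "z \<in> sols n T1" "lf n f z = 0" "\<forall>h\<in>T1 - {f}. 0 < lf n h z"
    using facet_point_of_nonredundant[of f T1 n x0] f T1 x0 T12(1) unfolding min_char_def by blast
  have halfspace: "0 \<le> lf n f w \<longleftrightarrow> (\<forall>g\<in>T2. lf n g z = 0 \<longrightarrow> 0 \<le> lf n g w)"
    if w: "w \<in> points n" for w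
  proof -
    have "0 \<le> lf n f w \<longleftrightarrow> (\<forall>g\<in>T1. lf n g z = 0 \<longrightarrow> 0 \<le> lf n g w)"
      using f z(2,3) by (metis DiffI less_irrefl singletonD)
    also have "\<dots> \<longleftrightarrow> (\<exists>e>0. (\<lambda>k. z k + e * w k) \<in> sols n T1)"
      using feasible_direction_iff[OF fin(1) z(1) w] by simp
    also have "\<dots> \<longleftrightarrow> (\<forall>g\<in>T2. lf n g z = 0 \<longrightarrow> 0 \<le> lf n g w)"
      using feasible_direction_iff[OF fin(2) _ w] z(1) T12(3) by simp
    finally show ?thesis .
  qed
  have "(\<lambda>k. (-1) * x0 k) \<in> points n" using x0(1) by (simp add: points_def)
  moreover have "\<not> 0 \<le> lf n f (\<lambda>k. (-1) * x0 k)" using x0(2) fR unfolding lf_smult by force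
  ultimately obtain g where g: "g \<in> T2" "lf n g z = 0" using halfspace by blast
  have "\<forall>w\<in>points n. 0 \<le> lf n f w \<longrightarrow> 0 \<le> lf n g w" using halfspace g by blast
  moreover have "lin_form n f" "f \<noteq> (\<lambda>_. 0)" "lin_form n g" "g \<noteq> (\<lambda>_. 0)"
    using R fR g(1) T12(2) unfolding ineq_set_def by auto
  ultimately obtain c where c: "c > 0" "g = (\<lambda>k. c * f k)"
    using nonneg_multiple_if_implies_nonneg[of n f g] by (metis less_eq_real_def mult_zero_left)
  then have "f = (\<lambda>k. (1 / c) * g k)" by auto
  then show ?thesis using g(1) c(1) unfolding triv_equiv_def by (metis divide_pos_pos zero_less_one)
qed

lemma min_char_triv_equiv_inj:
  assumes T: "min_char n R T" and f: "f1 \<in> T" "f2 \<in> T"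
    and triv: "triv_equiv f1 g" "triv_equiv f2 g"
  shows "f1 = f2"
proof (rule ccontr)
  assume "f1 \<noteq> f2"
  obtain c d where cd: "c > 0" "f1 = (\<lambda>k. c * g k)" "d > 0" "f2 = (\<lambda>k. d * g k)"
    using triv unfolding triv_equiv_def by blast
  have "redundant n T f1" unfolding redundant_def implies_ineq_def
  proof
    fix x assume "x \<in> sols n (T - {f1})"
    then have "0 \<le> lf n f2 x" using f(2) \<open>f1 \<noteq> f2\<close> unfolding sols_def by blast
    then show "0 \<le> lf n f1 x" using cd by (simp add: lf_smult_form zero_le_mult_iff)
  qed
  then show False using T f(1) unfolding min_char_def by blast
qed

lemma min_char_unique_up_to_triv_equiv:
  assumes R: "ineq_set n R" "impl_eqs n R = {}"
    and T1: "min_char n R T1" and T2: "min_char n R T2"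
  shows "triv_equiv_sets T1 T2"
proof -
  obtain x0 where x0: "x0 \<in> points n" "\<forall>h\<in>R. 0 < lf n h x0"
    using exists_strict_point R unfolding ineq_set_def by blast
  have fin: "finite T1" "finite T2"
    using R(1) T1 T2 finite_subset unfolding ineq_set_def min_char_def by auto
  have A: "\<forall>f\<in>T1. \<exists>g\<in>T2. triv_equiv f g"
    using min_char_member_triv_equiv[OF R(1) x0 T1 T2] by blast
  have B: "\<forall>f\<in>T2. \<exists>g\<in>T1. triv_equiv f g"
    using min_char_member_triv_equiv[OF R(1) x0 T2 T1] by blast
  have "card T1 \<le> card T2"
    by (rule card_le_if_inj_on_rel[OF fin(2), where r = triv_equiv])
      (use A min_char_triv_equiv_inj[OF T1] in blast)+
  moreover have "card T2 \<le> card T1"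
    by (rule card_le_if_inj_on_rel[OF fin(1), where r = triv_equiv])
      (use B min_char_triv_equiv_inj[OF T2] in blast)+
  ultimately show ?thesis unfolding triv_equiv_sets_def using A B by simp
qed

section \<open>Uniqueness of the reduced row echelon form\<close>

definition eq_sols :: "nat \<Rightarrow> (nat \<Rightarrow> real) set \<Rightarrow> (nat \<Rightarrow> real) set" where
  "eq_sols n E = {x \<in> points n. \<forall>f\<in>E. lf n f x = 0}"

definition piv_sols :: "nat \<Rightarrow> nat list \<Rightarrow> (nat \<Rightarrow> real) list \<Rightarrow> (nat \<Rightarrow> real) set" where
  "piv_sols n ks Us = {x \<in> points n. \<forall>i<length ks. x (ks ! i) = lf n (Us ! i) x}"

lemma gj_reducedD:
  assumes "gj_reduced n E ks Us"
  shows "length Us = length ks" "distinct ks" "sorted ks" "\<forall>k\<in>set ks. k < n"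
    "\<forall>i<length ks. lin_form n (Us ! i)" "\<forall>i<length ks. \<forall>l\<in>set ks. (Us ! i) l = 0"
    "\<forall>i<length ks. \<forall>l\<le>ks ! i. (Us ! i) l = 0" "piv_sols n ks Us = eq_sols n E"
  using assms unfolding gj_reduced_def strict_sorted_iff piv_sols_def eq_sols_def by auto

definition basic_sol :: "nat list \<Rightarrow> (nat \<Rightarrow> real) list \<Rightarrow> nat \<Rightarrow> nat \<Rightarrow> real" where
  "basic_sol ks Us l =
     (\<lambda>m. unit_vec l m + (\<Sum>i<length ks. if m = ks ! i then (Us ! i) l else 0))"

lemma basic_sol_nonpiv: "m \<notin> set ks \<Longrightarrow> basic_sol ks Us l m = unit_vec l m"
  unfolding basic_sol_def by (auto intro!: sum.neutral)

lemma basic_sol_piv: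
  assumes "distinct ks" "j < length ks" "l \<notin> set ks"
  shows "basic_sol ks Us l (ks ! j) = (Us ! j) l"
proof -
  have "ks ! j \<noteq> l" using assms nth_mem by metis
  moreover have "(\<Sum>i<length ks. if ks ! j = ks ! i then (Us ! i) l else 0)
      = (\<Sum>i<length ks. if i = j then (Us ! i) l else 0)"
    by (rule sum.cong) (use assms nth_eq_iff_index_eq in auto)
  ultimately show ?thesis unfolding basic_sol_def unit_vec_def using assms(2) by simp
qed

lemma lf_basic_sol:
  assumes "l < n" "\<forall>m\<in>set ks. U m = 0"
  shows "lf n U (basic_sol ks Us l) = U l"
proof -
  have "(\<lambda>m. U m * basic_sol ks Us l m) = (\<lambda>m. U m * unit_vec l m)"
    using assms(2) basic_sol_nonpiv[of _ ks Us l] by fastforce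
  then show ?thesis using lf_unit_vec[OF assms(1)] unfolding lf_def by metis
qed

lemma basic_sol_in_piv_sols:
  assumes g: "gj_reduced n E ks Us" and l: "l < n" "l \<notin> set ks"
  shows "basic_sol ks Us l \<in> piv_sols n ks Us"
proof -
  note F = gj_reducedD[OF g]
  have "basic_sol ks Us l m = 0" if "n \<le> m" for m
  proof -
    have "m \<notin> set ks" "m \<noteq> l" using that F(4) l by auto
    then show ?thesis by (simp add: basic_sol_nonpiv unit_vec_def)
  qed
  then show ?thesis
    using basic_sol_piv[OF F(2) _ l(2)] lf_basic_sol[OF l(1)] F(6)
    unfolding piv_sols_def points_def by simp
qed

lemma not_pivot_iff:
  assumes g: "gj_reduced n E ks Us" and k: "k < n"
  shows "k \<notin> set ks \<longleftrightarrow> (\<exists>x\<in>eq_sols n E. x k = 1 \<and> (\<forall>l>k. x l = 0))"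
proof
  note F = gj_reducedD[OF g]
  assume kn: "k \<notin> set ks"
  define x where "x = basic_sol ks Us k"
  have "x \<in> eq_sols n E" using basic_sol_in_piv_sols[OF g k kn] F(8) unfolding x_def by simp
  moreover have "x k = 1" unfolding x_def using basic_sol_nonpiv[OF kn] by (simp add: unit_vec_def)
  moreover have "x l = 0" if "l > k" for l
  proof (cases "l \<in> set ks")
    case True
    then obtain i where i: "i < length ks" "l = ks ! i" by (metis in_set_conv_nth)
    then show ?thesis unfolding x_def using basic_sol_piv[OF F(2) i(1) kn] F(7) that by auto
  next
    case False
    then show ?thesis unfolding x_def using basic_sol_nonpiv[OF False] that by (simp add: unit_vec_def)
  qed
  ultimately show "\<exists>x\<in>eq_sols n E. x k = 1 \<and> (\<forall>l>k. x l = 0)" by blast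
next
  note F = gj_reducedD[OF g]
  assume "\<exists>x\<in>eq_sols n E. x k = 1 \<and> (\<forall>l>k. x l = 0)"
  then obtain x where x: "x \<in> piv_sols n ks Us" "x k = 1" "\<forall>l>k. x l = 0" using F(8) by blast
  show "k \<notin> set ks"
  proof
    assume "k \<in> set ks"
    then obtain i where i: "i < length ks" "k = ks ! i" by (metis in_set_conv_nth)
    have "lf n (Us ! i) x = 0"
      unfolding lf_def using F(7) i x(3) by (intro sum.neutral ballI) (metis leI mult_eq_0_iff)
    then show False using x(1,2) i unfolding piv_sols_def by simp
  qed
qed

lemma gj_reduced_unique:
  assumes g1: "gj_reduced n E ks1 Us1" and g2: "gj_reduced n E ks2 Us2"
  shows "ks1 = ks2 \<and> Us1 = Us2"
proof -
  note F1 = gj_reducedD[OF g1] and F2 = gj_reducedD[OF g2]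
  have "set ks1 = set ks2"
  proof (intro set_eqI)
    fix k
    show "k \<in> set ks1 \<longleftrightarrow> k \<in> set ks2"
      using not_pivot_iff[OF g1, of k] not_pivot_iff[OF g2, of k] F1(4) F2(4)
      by (cases "k < n") auto
  qed
  then have ks: "ks1 = ks2" using sorted_distinct_set_unique F1(2,3) F2(2,3) by blast
  have "(Us1 ! i) l = (Us2 ! i) l" if i: "i < length ks1" for i l
  proof (cases "l < n \<and> l \<notin> set ks1")
    case True
    then have "basic_sol ks1 Us1 l \<in> piv_sols n ks2 Us2"
      using basic_sol_in_piv_sols[OF g1] F1(8) F2(8) by blast
    then have "basic_sol ks1 Us1 l (ks1 ! i) = lf n (Us2 ! i) (basic_sol ks1 Us1 l)"
      using i ks unfolding piv_sols_def by auto
    also have "\<dots> = (Us2 ! i) l" using lf_basic_sol True F2(6) i ks by simp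
    finally show ?thesis using basic_sol_piv[OF F1(2) i] True by simp
  next
    case False
    then show ?thesis using F1(5,6) F2(5,6) i ks unfolding lin_form_def by (auto simp: not_less)
  qed
  then have "Us1 = Us2" using F1(1) F2(1) ks by (intro nth_equalityI ext) auto
  then show ?thesis using ks by simp
qed

section \<open>Substituting the pivot variables\<close>

lemma lf_subst_piv:
  assumes ks: "distinct ks" "\<forall>k\<in>set ks. k < n" and x: "x \<in> piv_sols n ks Us"
  shows "lf n (subst_piv ks Us f) x = lf n f x"
proof -
  have "lf n (subst_piv ks Us f) x = (\<Sum>l<n. (if l \<in> set ks then 0 else f l) * x l)
      + (\<Sum>l<n. \<Sum>i<length ks. f (ks ! i) * ((Us ! i) l * x l))"
    unfolding subst_piv_def lf_def
    by (simp add: distrib_right sum.distrib sum_distrib_right mult.assoc)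
  also have "(\<Sum>l<n. \<Sum>i<length ks. f (ks ! i) * ((Us ! i) l * x l))
      = (\<Sum>i<length ks. f (ks ! i) * lf n (Us ! i) x)"
    unfolding lf_def sum_distrib_left by (rule sum.swap)
  also have "\<dots> = (\<Sum>i<length ks. f (ks ! i) * x (ks ! i))"
    using x unfolding piv_sols_def by simp
  also have "\<dots> = (\<Sum>l\<in>set ks. f l * x l)"
    using ks(1) by (simp add: sum_list_distinct_conv_sum_set[symmetric] sum_list_sum_nth atLeast0LessThan)
  also have "\<dots> = (\<Sum>l<n. if l \<in> set ks then f l * x l else 0)"
    using sum.inter_restrict[of "{..<n}" "\<lambda>l. f l * x l" "set ks"] ks(2)
    by (simp add: Int_absorb1 subset_iff)
  finally show ?thesis unfolding lf_def by (simp add: sum.distrib[symmetric] if_distrib cong: if_cong)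
qed

lemma lf_subst_piv_sols:
  assumes g: "gj_reduced n (impl_eqs n S) ks Us" and x: "x \<in> sols n S"
  shows "lf n (subst_piv ks Us f) x = lf n f x"
proof -
  note F = gj_reducedD[OF g]
  have "x \<in> eq_sols n (impl_eqs n S)"
    using x unfolding eq_sols_def sols_def impl_eqs_def implied_eq_def by auto
  then show ?thesis using lf_subst_piv[OF F(2,4)] F(8) by simp
qed

lemma sols_subset_sols_reduced_set:
  assumes "gj_reduced n (impl_eqs n S) ks Us"
  shows "sols n S \<subseteq> sols n (reduced_set n S ks Us)"
  using lf_subst_piv_sols[OF assms] unfolding sols_def reduced_set_def by fastforce

lemma impl_eqs_reduced_set:
  assumes g: "gj_reduced n (impl_eqs n S) ks Us"
  shows "impl_eqs n (reduced_set n S ks Us) = {}"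
proof -
  have "\<not> implied_eq n (reduced_set n S ks Us) h" if h: "h \<in> reduced_set n S ks Us" for h
  proof -
    obtain f where f: "f \<in> S" "\<not> implied_eq n S f" "h = subst_piv ks Us f"
      using h unfolding reduced_set_def impl_eqs_def by auto
    then obtain x where x: "x \<in> sols n S" "lf n f x \<noteq> 0" unfolding implied_eq_def by blast
    then have "x \<in> sols n (reduced_set n S ks Us)" using sols_subset_sols_reduced_set[OF g] by blast
    moreover have "lf n h x \<noteq> 0" using lf_subst_piv_sols[OF g x(1)] f(3) x(2) by simp
    ultimately show ?thesis unfolding implied_eq_def by blast
  qed
  then show ?thesis unfolding impl_eqs_def by blast
qed

lemma ineq_set_reduced_set:
  assumes S: "ineq_set n S" and g: "gj_reduced n E ks Us"
  shows "ineq_set n (reduced_set n S ks Us)"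
proof -
  note F = gj_reducedD[OF g]
  have "reduced_set n S ks Us \<subseteq> subst_piv ks Us ` S" unfolding reduced_set_def by auto
  then have "finite (reduced_set n S ks Us)" using S finite_surj unfolding ineq_set_def by blast
  moreover have "lin_form n (subst_piv ks Us f)" if "f \<in> S" for f
    using S that F(5) unfolding ineq_set_def lin_form_def subst_piv_def by simp
  ultimately show ?thesis unfolding ineq_set_def reduced_set_def by blast
qed

theorem theorem6:
  fixes n :: nat and S :: "(nat \<Rightarrow> real) set"
  assumes "ineq_set n S"
  shows "(\<forall>ks1 Us1 ks2 Us2.
            gj_reduced n (impl_eqs n S) ks1 Us1 \<and> gj_reduced n (impl_eqs n S) ks2 Us2
            \<longrightarrow> ks1 = ks2 \<and> Us1 = Us2)
       \<and> (\<forall>ks Us T1 T2.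
            gj_reduced n (impl_eqs n S) ks Us \<and>
            min_char n (reduced_set n S ks Us) T1 \<and> min_char n (reduced_set n S ks Us) T2
            \<longrightarrow> triv_equiv_sets T1 T2)"
  using gj_reduced_unique
    min_char_unique_up_to_triv_equiv[OF ineq_set_reduced_set[OF assms] impl_eqs_reduced_set]
  by blast

end
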